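(* Let $1<p<\infty$ and $d\ge 2$. Suppose $\Omega\subset\mathbb{R}^d$ is a bounded open set with $C^{2,\beta}$ boundary for some $0<\beta<1$, with outer unit normal $\nu$. Let the conductivity $\gamma$ be bounded from below by a positive constant, bounded, continuously differentiable on $\overline{\Omega}$, with $\nabla\gamma$ Hölder-continuous. Let the boundary values satisfy $v\in C^{2,\beta}(\partial\Omega)$, and let $u$ be the weak solution of $$\operatorname{div}\left(\gamma(x)|\nabla u|^{p-2}\nabla u\right)=0 \text{ in } \Omega,\qquad u=v \text{ on } \partial\Omega$$ (so $u\in C^1(\overline{\Omega})$). Then for every $x_0\in\partial\Omega$ the pointwise value of the strong Dirichlet-to-Neumann map $$\Lambda_\gamma^s(v)(x_0)=\gamma(x_0)\,|\nabla u(x_0)|^{p-2}\,\partial_\nu u(x_0)$$ can be recovered from the weak Dirichlet-to-Neumann map $$\Lambda_\gamma^w\colon W^{1,p}(\Omega)/W^{1,p}_0(\Omega)\to\left(W^{1,p}(\Omega)/W^{1,p}_0(\Omega)\right)',\qquad \langle\Lambda_\gamma^w(v),g\rangle=\int_\Omega \gamma|\nabla u|^{p-2}\nabla u\cdot\nabla\tilde g\,dx,$$ where $\tilde g\in W^{1,p}(\Omega)$ is any function with trace $g$ on $\partial\Omega$.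
   Context: Here $\partial_\nu u=\nu\cdot\nabla u$ denotes the derivative in the direction of the outer unit normal $\nu$ of $\partial\Omega$. *)

theory Defs
  imports "HOL-Analysis.Analysis"
begin

definition holder_on :: "'a::metric_space set \<Rightarrow> real \<Rightarrow> ('a \<Rightarrow> 'b::real_normed_vector) \<Rightarrow> bool" where
  "holder_on S a f \<longleftrightarrow> (\<exists>C. \<forall>x\<in>S. \<forall>y\<in>S. norm (f x - f y) \<le> C * dist x y powr a)"

definition C2_holder :: "'a::euclidean_space set \<Rightarrow> real \<Rightarrow> ('a \<Rightarrow> real) \<Rightarrow> ('a \<Rightarrow> 'a) \<Rightarrow> ('a \<Rightarrow> 'a \<Rightarrow> 'a) \<Rightarrow> bool" where
  "C2_holder S b V DV H \<longleftrightarrow>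
     (\<forall>x\<in>S. (V has_derivative (\<lambda>h. DV x \<bullet> h)) (at x) \<and> (DV has_derivative H x) (at x)) \<and>
     (\<exists>C. \<forall>x\<in>S. \<forall>y\<in>S. onorm (\<lambda>h. H x h - H y h) \<le> C * dist x y powr b)"

definition C2beta_boundary :: "'a::euclidean_space set \<Rightarrow> real \<Rightarrow> bool" where
  "C2beta_boundary \<Omega> b \<longleftrightarrow>
     (\<forall>x0\<in>frontier \<Omega>. \<exists>r>0. \<exists>\<rho> D\<rho> H.
        C2_holder (ball x0 r) b \<rho> D\<rho> H \<and> (\<forall>x\<in>ball x0 r. D\<rho> x \<noteq> 0) \<and>
        \<Omega> \<inter> ball x0 r = {x\<in>ball x0 r. \<rho> x < 0})"

definition outer_unit_normal :: "'a::euclidean_space set \<Rightarrow> 'a \<Rightarrow> 'a \<Rightarrow> bool" where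
  "outer_unit_normal \<Omega> x0 n \<longleftrightarrow> x0 \<in> frontier \<Omega> \<and>
     (\<exists>r>0. \<exists>\<rho> D\<rho>. (\<forall>x\<in>ball x0 r. (\<rho> has_derivative (\<lambda>h. D\<rho> x \<bullet> h)) (at x)) \<and>
        continuous_on (ball x0 r) D\<rho> \<and> D\<rho> x0 \<noteq> 0 \<and>
        \<Omega> \<inter> ball x0 r = {x\<in>ball x0 r. \<rho> x < 0} \<and>
        n = D\<rho> x0 /\<^sub>R norm (D\<rho> x0))"

definition C1_closure :: "'a::euclidean_space set \<Rightarrow> ('a \<Rightarrow> real) \<Rightarrow> ('a \<Rightarrow> 'a) \<Rightarrow> bool" where
  "C1_closure \<Omega> f Df \<longleftrightarrow> continuous_on (closure \<Omega>) f \<and> continuous_on (closure \<Omega>) Df \<and>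
     (\<forall>x\<in>\<Omega>. (f has_derivative (\<lambda>h. Df x \<bullet> h)) (at x))"

definition test_fn :: "'a::euclidean_space set \<Rightarrow> ('a \<Rightarrow> real) \<Rightarrow> ('a \<Rightarrow> 'a) \<Rightarrow> bool" where
  "test_fn \<Omega> \<phi> D\<phi> \<longleftrightarrow> (\<forall>x. (\<phi> has_derivative (\<lambda>h. D\<phi> x \<bullet> h)) (at x)) \<and> continuous_on UNIV D\<phi> \<and>
     compact (closure {x. \<phi> x \<noteq> 0}) \<and> closure {x. \<phi> x \<noteq> 0} \<subseteq> \<Omega>"

definition admissible_conductivity :: "'a::euclidean_space set \<Rightarrow> ('a \<Rightarrow> real) \<Rightarrow> bool" where
  "admissible_conductivity \<Omega> \<gamma> \<longleftrightarrow>
     (\<exists>c>0. \<forall>x\<in>closure \<Omega>. c \<le> \<gamma> x) \<and> (\<exists>M. \<forall>x\<in>closure \<Omega>. \<gamma> x \<le> M) \<and>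
     (\<exists>D\<gamma> a. C1_closure \<Omega> \<gamma> D\<gamma> \<and> 0 < a \<and> a < 1 \<and> holder_on (closure \<Omega>) a D\<gamma>)"

text \<open>The p-Laplace flux density \<gamma>|\<nabla>u|^(p-2)\<nabla>u paired with a vector w
  (with the usual convention that the flux is 0 where \<nabla>u = 0).\<close>
definition flux :: "real \<Rightarrow> real \<Rightarrow> 'a::euclidean_space \<Rightarrow> 'a \<Rightarrow> real" where
  "flux p g G w = g * norm G powr (p - 2) * (G \<bullet> w)"

definition weak_solution :: "'a::euclidean_space set \<Rightarrow> real \<Rightarrow> ('a \<Rightarrow> real) \<Rightarrow> ('a \<Rightarrow> real) \<Rightarrow> ('a \<Rightarrow> real) \<Rightarrow> ('a \<Rightarrow> 'a) \<Rightarrow> bool" where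
  "weak_solution \<Omega> p \<gamma> v u G \<longleftrightarrow> C1_closure \<Omega> u G \<and> (\<forall>x\<in>frontier \<Omega>. u x = v x) \<and>
     (\<forall>\<phi> D\<phi>. test_fn \<Omega> \<phi> D\<phi> \<longrightarrow> integral \<Omega> (\<lambda>x. flux p (\<gamma> x) (G x) (D\<phi> x)) = 0)"

definition weak_DN :: "'a::euclidean_space set \<Rightarrow> real \<Rightarrow> ('a \<Rightarrow> real) \<Rightarrow> ('a \<Rightarrow> 'a) \<Rightarrow> ('a \<Rightarrow> 'a) \<Rightarrow> real" where
  "weak_DN \<Omega> p \<gamma> G Dg = integral \<Omega> (\<lambda>x. flux p (\<gamma> x) (G x) (Dg x))"

definition strong_DN :: "real \<Rightarrow> ('a \<Rightarrow> real) \<Rightarrow> ('a \<Rightarrow> 'a) \<Rightarrow> 'a \<Rightarrow> 'a::euclidean_space \<Rightarrow> real" where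
  "strong_DN p \<gamma> G n x0 = flux p (\<gamma> x0) (G x0) n"

end

theory Submission
  imports Defs
begin

text \<open>The difference W of the two fluxes is continuous up to the boundary and is orthogonal in
  L^2(\<Omega>) to the gradient of every function that is C^1 up to the boundary. If W(x0) \<cdot> \<nu> > 0,
  take a defining function \<rho> of \<Omega> near x0 and the test function g = (max 0 \<tau>)^2 with
  \<tau> = \<rho> - |x - x0|^2 + t^2. For small t, g is supported in a neighbourhood of x0 where
  W \<cdot> \<nabla>\<tau> > 0, so W \<cdot> \<nabla>g \<ge> 0 on \<Omega>; it is positive somewhere since
  \<tau>(x0) = \<rho>(x0) + t^2 > 0, hence its integral cannot vanish. Applying this to W and -W
  gives W(x0) \<cdot> \<nu> = 0. Besides the equality of the weak Dirichlet-to-Neumann maps, only the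
  continuity of \<gamma> and \<nabla>u up to the boundary is used; the equation itself is not.\<close>

lemma integrable_on_open_if_continuous_on_closure:
  fixes f :: "'a::euclidean_space \<Rightarrow> real"
  assumes "open \<Omega>" "bounded \<Omega>" "continuous_on (closure \<Omega>) f"
  shows "f integrable_on \<Omega>"
proof -
  have "compact (closure \<Omega>)" using assms(2) by (simp add: compact_closure)
  then obtain B where B: "\<And>x. x \<in> closure \<Omega> \<Longrightarrow> norm (f x) \<le> B"
    using assms(3) compact_continuous_image compact_imp_bounded by (metis bounded_iff imageI)
  have lm: "\<Omega> \<in> lmeasurable" using assms by (simp add: bounded_set_imp_lmeasurable borel_open)
  show ?thesis
  proof (rule measurable_bounded_by_integrable_imp_integrable)
    show "f \<in> borel_measurable (lebesgue_on \<Omega>)"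
      using assms lm by (intro continuous_imp_measurable_on_sets_lebesgue)
        (auto intro: continuous_on_subset[OF _ closure_subset])
    show "(\<lambda>x. B) integrable_on \<Omega>" using lm by (rule integrable_on_const)
    show "\<And>x. x \<in> \<Omega> \<Longrightarrow> norm (f x) \<le> B" using B closure_subset by blast
  qed (use lm in auto)
qed

lemma nonneg_integral_eq_0_imp_0_on_open:
  fixes f :: "'a::euclidean_space \<Rightarrow> real"
  assumes "open S" "continuous_on S f" "f integrable_on S"
    and nonneg: "\<And>x. x \<in> S \<Longrightarrow> 0 \<le> f x" and "integral S f = 0" and "x \<in> S"
  shows "f x = 0"
proof -
  obtain a b where ab: "cbox a b \<subseteq> S" "x \<in> box a b"
    using open_contains_cbox[OF \<open>open S\<close> \<open>x \<in> S\<close>] by metis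
  have int_ab: "f integrable_on cbox a b"
    using integrable_on_subcbox[OF \<open>f integrable_on S\<close> ab(1)] .
  have "integral (cbox a b) f \<le> integral S f"
    by (rule integral_subset_le[OF ab(1) int_ab \<open>f integrable_on S\<close>]) (use nonneg in auto)
  moreover have "0 \<le> integral (cbox a b) f"
    by (rule integral_nonneg[OF int_ab]) (use ab(1) nonneg in auto)
  ultimately have "integral (cbox a b) f = 0" using \<open>integral S f = 0\<close> by simp
  then show ?thesis
    using integral_cbox_eq_0_iff[of a b f] ab box_subset_cbox assms(2) nonneg
    by (metis continuous_on_subset empty_iff subsetD)
qed

lemma has_real_derivative_max0_power2:
  "((\<lambda>u::real. (max 0 u)\<^sup>2) has_real_derivative (2 * max 0 u)) (at u)"
proof (cases "u = 0")
  case False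
  show ?thesis
  proof (cases "u > 0")
    case True
    have "((\<lambda>u::real. u\<^sup>2) has_real_derivative (2 * max 0 u)) (at u)"
      using True by (auto intro!: derivative_eq_intros)
    then show ?thesis
      by (rule has_field_derivative_transform_within_open[where S="{0<..}"]) (use True in auto)
  next
    case False
    have "((\<lambda>u::real. 0) has_real_derivative (2 * max 0 u)) (at u)"
      using False \<open>u \<noteq> 0\<close> by (auto intro!: derivative_eq_intros)
    then show ?thesis
      by (rule has_field_derivative_transform_within_open[where S="{..<0}"])
        (use False \<open>u \<noteq> 0\<close> in auto)
  qed
next
  case True
  have "((\<lambda>y::real. (max 0 y)\<^sup>2 / y) \<longlongrightarrow> 0) (at 0)"
  proof (rule Lim_null_comparison)
    show "\<forall>\<^sub>F y in at (0::real). norm ((max 0 y)\<^sup>2 / y) \<le> \<bar>y\<bar>"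
      by (rule always_eventually) (auto simp: max_def power2_eq_square)
    show "((\<lambda>y::real. \<bar>y\<bar>) \<longlongrightarrow> 0) (at 0)"
      using tendsto_rabs[OF tendsto_ident_at[where a="0::real" and s=UNIV]] by simp
  qed
  then show ?thesis unfolding True has_field_derivative_iff by simp
qed

lemma continuous_norm_powr_scaleR:
  fixes z :: "'a::real_normed_vector"
  assumes "1 < p"
  shows "continuous (at z) (\<lambda>z. norm z powr (p - 2) *\<^sub>R z)"
proof (cases "z = 0")
  case False
  then show ?thesis by (intro continuous_intros) auto
next
  case True
  have "((\<lambda>y::'a. norm y powr (p - 2) *\<^sub>R y) \<longlongrightarrow> 0) (at 0)"
  proof (rule Lim_null_comparison)
    have "norm (norm y powr (p - 2) *\<^sub>R y) = norm y powr (p - 1)" for y :: 'a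
      using powr_add[of "norm y" "p - 2" 1] by (cases "y = 0") simp_all
    then show "\<forall>\<^sub>F y in at (0::'a). norm (norm y powr (p - 2) *\<^sub>R y) \<le> norm y powr (p - 1)"
      by simp
    have "((\<lambda>y::'a. norm y powr (p - 1)) \<longlongrightarrow> norm (0::'a) powr (p - 1)) (at 0)"
      using assms by (intro tendsto_intros) auto
    then show "((\<lambda>y::'a. norm y powr (p - 1)) \<longlongrightarrow> 0) (at 0)" using assms by simp
  qed
  then show ?thesis unfolding True continuous_at by simp
qed

lemma continuous_on_flux_field:
  fixes G :: "'b::topological_space \<Rightarrow> 'a::real_normed_vector"
  assumes "1 < p" "continuous_on S \<gamma>" "continuous_on S G"
  shows "continuous_on S (\<lambda>x. \<gamma> x *\<^sub>R (norm (G x) powr (p - 2) *\<^sub>R G x))"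
proof -
  have "continuous_on UNIV (\<lambda>z::'a. norm z powr (p - 2) *\<^sub>R z)"
    by (intro continuous_at_imp_continuous_on ballI continuous_norm_powr_scaleR[OF assms(1)])
  then have "continuous_on S (\<lambda>x. norm (G x) powr (p - 2) *\<^sub>R G x)"
    using continuous_on_compose2[OF _ assms(3)] by blast
  then show ?thesis using continuous_on_scaleR[OF assms(2)] by blast
qed

lemma flux_eq_inner: "flux p g G w = (g *\<^sub>R (norm G powr (p - 2) *\<^sub>R G)) \<bullet> w"
  by (simp add: flux_def)

lemma positive_at_closure_point_imp_positive_in_set:
  fixes \<tau> :: "'a::topological_space \<Rightarrow> real"
  assumes "open U" "continuous_on U \<tau>" "x \<in> closure \<Omega> \<inter> U" "\<tau> x > 0"
  obtains y where "y \<in> \<Omega> \<inter> U" "\<tau> y > 0"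
proof -
  have "open (U \<inter> \<tau> -` {0<..})"
    using assms(1,2) by (intro continuous_open_preimage) auto
  moreover have "x \<in> (U \<inter> \<tau> -` {0<..}) \<inter> closure \<Omega>"
    using assms(3,4) by auto
  ultimately have "(U \<inter> \<tau> -` {0<..}) \<inter> \<Omega> \<noteq> {}"
    using open_Int_closure_eq_empty by blast
  then show ?thesis using that by auto
qed

lemma nonpos_on_closure_if_nonpos_on:
  fixes \<rho> :: "'a::topological_space \<Rightarrow> real"
  assumes "open U" "continuous_on U \<rho>" "\<And>y. y \<in> \<Omega> \<inter> U \<Longrightarrow> \<rho> y \<le> 0"
    and "x \<in> closure \<Omega> \<inter> U"
  shows "\<rho> x \<le> 0"
proof (rule ccontr)
  assume "\<not> \<rho> x \<le> 0"
  then obtain y where "y \<in> \<Omega> \<inter> U" "\<rho> y > 0"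
    using positive_at_closure_point_imp_positive_in_set[OF assms(1,2,4)] by force
  then show False using assms(3) by force
qed

lemma continuous_on_if_vanishes_outside_cball:
  fixes f :: "'a::metric_space \<Rightarrow> 'b::{zero,topological_space}"
  assumes "closed C" "s < r" "continuous_on (C \<inter> ball x0 r) f"
    and vanish: "\<And>x. x \<in> C \<Longrightarrow> s \<le> dist x0 x \<Longrightarrow> f x = 0"
  shows "continuous_on C f"
proof -
  have split: "C = (C \<inter> cball x0 s) \<union> (C - ball x0 s)" by auto
  have "continuous_on (C \<inter> cball x0 s) f"
    using \<open>s < r\<close> by (intro continuous_on_subset[OF assms(3)]) auto
  moreover have "continuous_on (C - ball x0 s) f"
    by (rule continuous_on_eq[OF continuous_on_const[of _ 0]]) (use vanish in auto)
  ultimately show ?thesis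
    by (subst split, intro continuous_on_closed_Un) (use \<open>closed C\<close> in auto)
qed

lemma C1_closure_max0_power2:
  fixes \<Omega> :: "'a::euclidean_space set" and \<tau> :: "'a \<Rightarrow> real"
  assumes "open \<Omega>" "s < r"
    and \<tau>_deriv: "\<And>x. x \<in> ball x0 r \<Longrightarrow> (\<tau> has_derivative (\<lambda>h. D\<tau> x \<bullet> h)) (at x)"
    and D\<tau>_cont: "continuous_on (ball x0 r) D\<tau>"
    and supp: "\<And>x. x \<in> closure \<Omega> \<inter> ball x0 r \<Longrightarrow> s \<le> dist x0 x \<Longrightarrow> \<tau> x \<le> 0"
  shows "C1_closure \<Omega> (\<lambda>x. if x \<in> ball x0 r then (max 0 (\<tau> x))\<^sup>2 else 0)
                     (\<lambda>x. if x \<in> ball x0 r then (2 * max 0 (\<tau> x)) *\<^sub>R D\<tau> x else 0)"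
    (is "C1_closure \<Omega> ?g ?Dg")
proof -
  have \<tau>_cont: "continuous_on (ball x0 r) \<tau>"
    using \<tau>_deriv by (meson has_derivative_continuous continuous_at_imp_continuous_on)
  have vanish: "?g x = 0 \<and> ?Dg x = 0" if "x \<in> closure \<Omega>" "s \<le> dist x0 x" for x
    using supp[of x] that by auto
  have "continuous_on (closure \<Omega> \<inter> ball x0 r) (\<lambda>x. (max 0 (\<tau> x))\<^sup>2)"
    by (intro continuous_intros continuous_on_subset[OF \<tau>_cont]) auto
  then have "continuous_on (closure \<Omega>) ?g"
    by (rule continuous_on_if_vanishes_outside_cball[OF closed_closure \<open>s < r\<close> continuous_on_eq])
      (simp, meson vanish)
  moreover have "continuous_on (closure \<Omega> \<inter> ball x0 r) (\<lambda>x. (2 * max 0 (\<tau> x)) *\<^sub>R D\<tau> x)"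
    by (intro continuous_intros continuous_on_subset[OF \<tau>_cont] continuous_on_subset[OF D\<tau>_cont])
      auto
  then have "continuous_on (closure \<Omega>) ?Dg"
    by (rule continuous_on_if_vanishes_outside_cball[OF closed_closure \<open>s < r\<close> continuous_on_eq])
      (simp, meson vanish)
  moreover have "(?g has_derivative (\<lambda>h. ?Dg x \<bullet> h)) (at x)" if "x \<in> \<Omega>" for x
  proof (cases "x \<in> ball x0 r")
    case True
    have "((\<lambda>y. (max 0 (\<tau> y))\<^sup>2) has_derivative (\<lambda>h. 2 * max 0 (\<tau> x) * (D\<tau> x \<bullet> h))) (at x)"
      by (rule has_derivative_compose[OF \<tau>_deriv[OF True]
            has_field_derivative_imp_has_derivative[OF has_real_derivative_max0_power2]])
    then have "((\<lambda>y. (max 0 (\<tau> y))\<^sup>2) has_derivative (\<lambda>h. ?Dg x \<bullet> h)) (at x)"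
      using True by simp
    then show ?thesis
      by (rule has_derivative_transform_within_open[OF _ open_ball True]) simp
  next
    case False
    have x_out: "x \<in> \<Omega> - cball x0 s" using False that \<open>s < r\<close> by auto
    have g_out: "?g y = 0" if "y \<in> \<Omega> - cball x0 s" for y
      using vanish[of y] that closure_subset[of \<Omega>] by auto
    have open_out: "open (\<Omega> - cball x0 s)" using \<open>open \<Omega>\<close> by (simp add: open_Diff)
    have "((\<lambda>y. 0) has_derivative (\<lambda>h. ?Dg x \<bullet> h)) (at x)"
      using False by simp
    then show ?thesis
      by (rule has_derivative_transform_within_open[OF _ open_out x_out]) (use g_out in simp)
  qed
  ultimately show ?thesis by (simp add: C1_closure_def)
qed

lemma exists_localized_defining_function:
  fixes \<Omega> :: "'a::euclidean_space set" and W :: "'a \<Rightarrow> 'a"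
  assumes W_cont: "continuous_on (closure \<Omega>) W"
    and x0_closure: "x0 \<in> closure \<Omega>" and "x0 \<notin> \<Omega>" and "r > 0"
    and \<rho>_deriv: "\<And>x. x \<in> ball x0 r \<Longrightarrow> (\<rho> has_derivative (\<lambda>h. D\<rho> x \<bullet> h)) (at x)"
    and D\<rho>_cont: "continuous_on (ball x0 r) D\<rho>"
    and \<Omega>_local: "\<Omega> \<inter> ball x0 r = {x \<in> ball x0 r. \<rho> x < 0}"
    and "W x0 \<bullet> D\<rho> x0 > 0"
  obtains t and \<tau> :: "'a \<Rightarrow> real" and D\<tau> where "t < r"
    "\<forall>x\<in>ball x0 r. (\<tau> has_derivative (\<lambda>h. D\<tau> x \<bullet> h)) (at x)"
    "continuous_on (ball x0 r) D\<tau>" "\<tau> x0 > 0"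
    "\<forall>x\<in>closure \<Omega> \<inter> ball x0 r. \<tau> x > 0 \<longrightarrow> dist x0 x < t \<and> W x \<bullet> D\<tau> x > 0"
proof -
  define D\<tau> where "D\<tau> x = D\<rho> x - 2 *\<^sub>R (x - x0)" for x
  define S where "S = closure \<Omega> \<inter> ball x0 r"
  have "continuous_on S (\<lambda>x. W x \<bullet> D\<tau> x)"
    unfolding S_def D\<tau>_def
    by (intro continuous_intros continuous_on_subset[OF W_cont] continuous_on_subset[OF D\<rho>_cont]) auto
  moreover have "x0 \<in> S" using x0_closure \<open>r > 0\<close> by (simp add: S_def)
  moreover have "W x0 \<bullet> D\<tau> x0 > 0" using \<open>W x0 \<bullet> D\<rho> x0 > 0\<close> by (simp add: D\<tau>_def)
  ultimately obtain s where "s > 0" and s: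
    "\<And>x. x \<in> S \<Longrightarrow> dist x x0 < s \<Longrightarrow> dist (W x \<bullet> D\<tau> x) (W x0 \<bullet> D\<tau> x0) < W x0 \<bullet> D\<tau> x0"
    unfolding continuous_on_iff by metis
  define t where "t = min s (r / 2)"
  have "0 < t" "t \<le> s" "t < r" using \<open>s > 0\<close> \<open>r > 0\<close> by (simp_all add: t_def)
  define \<tau> where "\<tau> x = \<rho> x - (x - x0) \<bullet> (x - x0) + t\<^sup>2" for x
  have \<rho>_cont: "continuous_on (ball x0 r) \<rho>"
    using \<rho>_deriv by (meson has_derivative_continuous continuous_at_imp_continuous_on)
  have near_x0: "dist x0 x < t" if "x \<in> S" "\<tau> x > 0" for x
  proof -
    have "\<rho> x \<le> 0"
      using nonpos_on_closure_if_nonpos_on[OF open_ball \<rho>_cont _ \<open>x \<in> S\<close>[unfolded S_def]] \<Omega>_local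
      by auto
    moreover have "(x - x0) \<bullet> (x - x0) = (dist x0 x)\<^sup>2"
      by (simp add: dist_norm dot_square_norm norm_minus_commute)
    ultimately have "(dist x0 x)\<^sup>2 < t\<^sup>2"
      using \<open>\<tau> x > 0\<close> unfolding \<tau>_def by linarith
    then show ?thesis using \<open>0 < t\<close> by (simp add: power2_less_imp_less)
  qed
  show ?thesis
  proof (rule that[OF \<open>t < r\<close>])
    show "\<forall>x\<in>ball x0 r. (\<tau> has_derivative (\<lambda>h. D\<tau> x \<bullet> h)) (at x)"
    proof
      fix x assume "x \<in> ball x0 r"
      have "(\<tau> has_derivative (\<lambda>h. D\<rho> x \<bullet> h - (h \<bullet> (x - x0) + (x - x0) \<bullet> h) + 0)) (at x)"
        unfolding \<tau>_def by (intro derivative_eq_intros) (use \<rho>_deriv[OF \<open>x \<in> ball x0 r\<close>] in auto)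
      then show "(\<tau> has_derivative (\<lambda>h. D\<tau> x \<bullet> h)) (at x)"
        by (simp add: D\<tau>_def inner_diff_left inner_diff_right inner_commute)
    qed
    show "continuous_on (ball x0 r) D\<tau>"
      unfolding D\<tau>_def by (intro continuous_intros D\<rho>_cont)
    have "x0 \<in> ball x0 r" using \<open>r > 0\<close> by simp
    then have "\<not> \<rho> x0 < 0" using \<Omega>_local \<open>x0 \<notin> \<Omega>\<close> by blast
    moreover have "t\<^sup>2 > 0" using \<open>0 < t\<close> by simp
    moreover have "\<tau> x0 = \<rho> x0 + t\<^sup>2" by (simp add: \<tau>_def)
    ultimately show "\<tau> x0 > 0" by linarith
    show "\<forall>x\<in>closure \<Omega> \<inter> ball x0 r. \<tau> x > 0 \<longrightarrow> dist x0 x < t \<and> W x \<bullet> D\<tau> x > 0"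
    proof (intro ballI impI conjI)
      fix x assume "x \<in> closure \<Omega> \<inter> ball x0 r" "\<tau> x > 0"
      then have "x \<in> S" by (simp add: S_def)
      then show "dist x0 x < t" using near_x0 \<open>\<tau> x > 0\<close> by blast
      then have "dist x x0 < s" using \<open>t \<le> s\<close> by (simp add: dist_commute)
      then have "\<bar>W x \<bullet> D\<tau> x - W x0 \<bullet> D\<tau> x0\<bar> < W x0 \<bullet> D\<tau> x0"
        using s[OF \<open>x \<in> S\<close>] by (simp add: dist_real_def)
      then show "W x \<bullet> D\<tau> x > 0" by linarith
    qed
  qed
qed

lemma exists_C1_closure_nonneg_flux:
  fixes \<Omega> :: "'a::euclidean_space set" and W :: "'a \<Rightarrow> 'a"
  assumes "open \<Omega>" and W_cont: "continuous_on (closure \<Omega>) W"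
    and x0_closure: "x0 \<in> closure \<Omega>" and "x0 \<notin> \<Omega>" and "r > 0"
    and \<rho>_deriv: "\<And>x. x \<in> ball x0 r \<Longrightarrow> (\<rho> has_derivative (\<lambda>h. D\<rho> x \<bullet> h)) (at x)"
    and D\<rho>_cont: "continuous_on (ball x0 r) D\<rho>"
    and \<Omega>_local: "\<Omega> \<inter> ball x0 r = {x \<in> ball x0 r. \<rho> x < 0}"
    and "W x0 \<bullet> D\<rho> x0 > 0"
  obtains g Dg y where "C1_closure \<Omega> g Dg" "\<And>x. x \<in> \<Omega> \<Longrightarrow> 0 \<le> W x \<bullet> Dg x"
    "y \<in> \<Omega>" "0 < W y \<bullet> Dg y"
proof -
  obtain t and \<tau> :: "'a \<Rightarrow> real" and D\<tau> where "t < r"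
    and \<tau>_deriv: "\<forall>x\<in>ball x0 r. (\<tau> has_derivative (\<lambda>h. D\<tau> x \<bullet> h)) (at x)"
    and D\<tau>_cont: "continuous_on (ball x0 r) D\<tau>" and "\<tau> x0 > 0"
    and support: "\<forall>x\<in>closure \<Omega> \<inter> ball x0 r. \<tau> x > 0 \<longrightarrow> dist x0 x < t \<and> W x \<bullet> D\<tau> x > 0"
    using exists_localized_defining_function[OF W_cont x0_closure \<open>x0 \<notin> \<Omega>\<close> \<open>r > 0\<close> \<rho>_deriv
        D\<rho>_cont \<Omega>_local \<open>W x0 \<bullet> D\<rho> x0 > 0\<close>] .
  define g where "g x = (if x \<in> ball x0 r then (max 0 (\<tau> x))\<^sup>2 else 0)" for x
  define Dg where "Dg x = (if x \<in> ball x0 r then (2 * max 0 (\<tau> x)) *\<^sub>R D\<tau> x else 0)" for x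
  have "C1_closure \<Omega> g Dg"
    unfolding g_def Dg_def
    by (rule C1_closure_max0_power2[OF \<open>open \<Omega>\<close> \<open>t < r\<close> _ D\<tau>_cont])
      (use \<tau>_deriv support in \<open>auto simp: not_less[symmetric]\<close>)
  have flux_on_support: "W x \<bullet> Dg x = 2 * \<tau> x * (W x \<bullet> D\<tau> x) \<and> W x \<bullet> D\<tau> x > 0"
    if "x \<in> \<Omega> \<inter> ball x0 r" "\<tau> x > 0" for x
    using that support closure_subset[of \<Omega>] by (auto simp: Dg_def)
  have flux_nonneg: "0 \<le> W x \<bullet> Dg x" if "x \<in> \<Omega>" for x
  proof (cases "x \<in> ball x0 r \<and> \<tau> x > 0")
    case True
    then show ?thesis using flux_on_support[of x] that by simp
  next
    case False
    then show ?thesis by (auto simp: Dg_def)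
  qed
  have \<tau>_cont: "continuous_on (ball x0 r) \<tau>"
    using \<tau>_deriv by (meson has_derivative_continuous continuous_at_imp_continuous_on)
  have x0_ball: "x0 \<in> closure \<Omega> \<inter> ball x0 r" using x0_closure \<open>r > 0\<close> by simp
  obtain y where y: "y \<in> \<Omega> \<inter> ball x0 r" "\<tau> y > 0"
    using positive_at_closure_point_imp_positive_in_set[OF open_ball \<tau>_cont x0_ball \<open>\<tau> x0 > 0\<close>] .
  show ?thesis
    by (rule that[OF \<open>C1_closure \<Omega> g Dg\<close> flux_nonneg]) (use flux_on_support[OF y] y in auto)
qed

lemma outer_normal_component_nonpos:
  fixes \<Omega> :: "'a::euclidean_space set" and W :: "'a \<Rightarrow> 'a"
  assumes "open \<Omega>" "bounded \<Omega>" and W_cont: "continuous_on (closure \<Omega>) W"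
    and orth: "\<And>g Dg. C1_closure \<Omega> g Dg \<Longrightarrow> integral \<Omega> (\<lambda>x. W x \<bullet> Dg x) = 0"
    and "outer_unit_normal \<Omega> x0 n"
  shows "W x0 \<bullet> n \<le> 0"
proof (rule ccontr)
  assume "\<not> W x0 \<bullet> n \<le> 0"
  from \<open>outer_unit_normal \<Omega> x0 n\<close> obtain r \<rho> D\<rho> where "x0 \<in> frontier \<Omega>" "r > 0"
    and \<rho>_deriv: "\<And>x. x \<in> ball x0 r \<Longrightarrow> (\<rho> has_derivative (\<lambda>h. D\<rho> x \<bullet> h)) (at x)"
    and D\<rho>_cont: "continuous_on (ball x0 r) D\<rho>"
    and \<Omega>_local: "\<Omega> \<inter> ball x0 r = {x \<in> ball x0 r. \<rho> x < 0}"
    and n_eq: "n = D\<rho> x0 /\<^sub>R norm (D\<rho> x0)"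
    unfolding outer_unit_normal_def by blast
  have x0: "x0 \<in> closure \<Omega>" "x0 \<notin> \<Omega>"
    using \<open>x0 \<in> frontier \<Omega>\<close> \<open>open \<Omega>\<close> by (auto simp: frontier_def interior_open)
  have "W x0 \<bullet> n = (W x0 \<bullet> D\<rho> x0) / norm (D\<rho> x0)"
    by (simp add: n_eq divide_inverse_commute)
  then have "W x0 \<bullet> D\<rho> x0 > 0"
    using \<open>\<not> W x0 \<bullet> n \<le> 0\<close> by (simp add: divide_le_0_iff)
  then obtain g Dg y where g: "C1_closure \<Omega> g Dg"
    and nonneg: "\<And>x. x \<in> \<Omega> \<Longrightarrow> 0 \<le> W x \<bullet> Dg x" and "y \<in> \<Omega>" "0 < W y \<bullet> Dg y"
    using exists_C1_closure_nonneg_flux[OF \<open>open \<Omega>\<close> W_cont x0 \<open>r > 0\<close> \<rho>_deriv D\<rho>_cont \<Omega>_local]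
    by blast
  have cont: "continuous_on (closure \<Omega>) (\<lambda>x. W x \<bullet> Dg x)"
    using g unfolding C1_closure_def by (intro continuous_intros W_cont) simp
  have "W y \<bullet> Dg y = 0"
    using nonneg_integral_eq_0_imp_0_on_open[OF \<open>open \<Omega>\<close> continuous_on_subset[OF cont closure_subset]
        integrable_on_open_if_continuous_on_closure[OF \<open>open \<Omega>\<close> \<open>bounded \<Omega>\<close> cont] nonneg]
      orth[OF g] \<open>y \<in> \<Omega>\<close> by simp
  with \<open>0 < W y \<bullet> Dg y\<close> show False by simp
qed

lemma outer_normal_component_eq:
  fixes \<Omega> :: "'a::euclidean_space set" and V1 V2 :: "'a \<Rightarrow> 'a"
  assumes "open \<Omega>" "bounded \<Omega>"
    and V1_cont: "continuous_on (closure \<Omega>) V1" and V2_cont: "continuous_on (closure \<Omega>) V2"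
    and same: "\<And>g Dg. C1_closure \<Omega> g Dg \<Longrightarrow>
                 integral \<Omega> (\<lambda>x. V1 x \<bullet> Dg x) = integral \<Omega> (\<lambda>x. V2 x \<bullet> Dg x)"
    and "outer_unit_normal \<Omega> x0 n"
  shows "V1 x0 \<bullet> n = V2 x0 \<bullet> n"
proof -
  have orth: "integral \<Omega> (\<lambda>x. (V1 x - V2 x) \<bullet> Dg x) = 0"
    "integral \<Omega> (\<lambda>x. (V2 x - V1 x) \<bullet> Dg x) = 0" if "C1_closure \<Omega> g Dg" for g Dg
  proof -
    have Dg_cont: "continuous_on (closure \<Omega>) Dg" using that by (simp add: C1_closure_def)
    have "(\<lambda>x. V1 x \<bullet> Dg x) integrable_on \<Omega>" "(\<lambda>x. V2 x \<bullet> Dg x) integrable_on \<Omega>"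
      by (intro integrable_on_open_if_continuous_on_closure assms(1,2) continuous_intros
          V1_cont V2_cont Dg_cont)+
    then show "integral \<Omega> (\<lambda>x. (V1 x - V2 x) \<bullet> Dg x) = 0"
      "integral \<Omega> (\<lambda>x. (V2 x - V1 x) \<bullet> Dg x) = 0"
      using same[OF that] by (simp_all add: inner_diff_left integral_diff)
  qed
  have "(V1 x0 - V2 x0) \<bullet> n \<le> 0" "(V2 x0 - V1 x0) \<bullet> n \<le> 0"
    by (rule outer_normal_component_nonpos[OF assms(1,2) _ _ \<open>outer_unit_normal \<Omega> x0 n\<close>],
        use orth V1_cont V2_cont in \<open>auto intro: continuous_intros\<close>)+
  then show ?thesis by (simp add: inner_diff_left)
qed

theorem lemma4p3:
  fixes \<Omega> :: "'a::euclidean_space set"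
    and p \<beta> :: real
    and v \<gamma>1 \<gamma>2 u1 u2 :: "'a \<Rightarrow> real"
    and G1 G2 \<nu> :: "'a \<Rightarrow> 'a"
    and x0 :: 'a
  assumes "1 < p" and "DIM('a) \<ge> 2"
    and "open \<Omega>" and "bounded \<Omega>"
    and "0 < \<beta>" and "\<beta> < 1" and "C2beta_boundary \<Omega> \<beta>"
    and "\<forall>x\<in>frontier \<Omega>. outer_unit_normal \<Omega> x (\<nu> x)"
    and "\<exists>V DV H. C2_holder (closure \<Omega>) \<beta> V DV H \<and> (\<forall>x\<in>frontier \<Omega>. V x = v x)"
    and "admissible_conductivity \<Omega> \<gamma>1" and "admissible_conductivity \<Omega> \<gamma>2"
    and "weak_solution \<Omega> p \<gamma>1 v u1 G1" and "weak_solution \<Omega> p \<gamma>2 v u2 G2"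
    and "\<forall>g Dg. C1_closure \<Omega> g Dg \<longrightarrow> weak_DN \<Omega> p \<gamma>1 G1 Dg = weak_DN \<Omega> p \<gamma>2 G2 Dg"
    and "x0 \<in> frontier \<Omega>"
  shows "strong_DN p \<gamma>1 G1 (\<nu> x0) x0 = strong_DN p \<gamma>2 G2 (\<nu> x0) x0"
proof -
  define F1 where "F1 x = \<gamma>1 x *\<^sub>R (norm (G1 x) powr (p - 2) *\<^sub>R G1 x)" for x
  define F2 where "F2 x = \<gamma>2 x *\<^sub>R (norm (G2 x) powr (p - 2) *\<^sub>R G2 x)" for x
  have "continuous_on (closure \<Omega>) \<gamma>1" "continuous_on (closure \<Omega>) \<gamma>2"
    "continuous_on (closure \<Omega>) G1" "continuous_on (closure \<Omega>) G2"
    using assms(10-13)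
    unfolding admissible_conductivity_def weak_solution_def C1_closure_def by blast+
  then have "continuous_on (closure \<Omega>) F1" "continuous_on (closure \<Omega>) F2"
    unfolding F1_def F2_def using continuous_on_flux_field[OF \<open>1 < p\<close>] by blast+
  moreover have "outer_unit_normal \<Omega> x0 (\<nu> x0)" using assms(8,15) by blast
  moreover have "flux p (\<gamma>1 x) (G1 x) w = F1 x \<bullet> w" "flux p (\<gamma>2 x) (G2 x) w = F2 x \<bullet> w" for x w
    by (simp_all add: F1_def F2_def flux_eq_inner)
  ultimately show ?thesis
    using outer_normal_component_eq[OF \<open>open \<Omega>\<close> \<open>bounded \<Omega>\<close>, of F1 F2 x0 "\<nu> x0"] assms(14)
    by (simp add: strong_DN_def weak_DN_def)
qed

end
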